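(* Let $R_{e,q}=\mathbb{F}_q[u]/\langle u^e-1\rangle$, where $q=p^m$ with $p$ an odd prime and $q=et+1$ for integers $e\geq 2,t\geq 1$. Then every cyclic code of length $n$ over $R_{e,q}$ is principally generated; that is, $R_{e,q}[x]/\langle x^n-1\rangle$ is a principal ideal ring.
   Context: Cyclic codes of length $n$ over $R_{e,q}$ (submodules of $R_{e,q}^n$ closed under cyclic shift) are identified with ideals of $R_{e,q}[x]/\langle x^n-1\rangle$. *)

theory Defs
  imports "HOL-Algebra.Algebra" "HOL-Computational_Algebra.Primes"
begin

definition poly_ring :: "('a, 'b) ring_scheme \<Rightarrow> 'a list ring" where
  "poly_ring A = univ_poly A (carrier A)"

definition xn_minus_1 :: "('a, 'b) ring_scheme \<Rightarrow> nat \<Rightarrow> 'a list" where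
  "xn_minus_1 A n =
     (var A [^]\<^bsub>poly_ring A\<^esub> n) \<ominus>\<^bsub>poly_ring A\<^esub> \<one>\<^bsub>poly_ring A\<^esub>"

definition cyclic_quot :: "('a, 'b) ring_scheme \<Rightarrow> nat \<Rightarrow> 'a list set ring" where
  "cyclic_quot A n = poly_ring A Quot (PIdl\<^bsub>poly_ring A\<^esub> (xn_minus_1 A n))"

definition Req :: "('a, 'b) ring_scheme \<Rightarrow> nat \<Rightarrow> 'a list set ring" where
  "Req K e = cyclic_quot K e"

end

theory Submission
  imports Defs
begin

text \<open>Since e divides q - 1, the field K = F_q contains a primitive e-th root of unity \<omega>, and e is
  invertible in K. Hence the discrete Fourier idempotents eps_i = e^-1 * sum_j (\<omega>^-i u)^j of
  R_{e,q} = K[u]/(u^e - 1) are orthogonal, sum to 1 and satisfy u eps_i = \<omega>^i eps_i. The ring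
  S = R_{e,q}[x]/(x^n - 1) is generated by K, u and x, so every component eps_i S is the image of
  the principal ideal domain K[x] under x |-> x, and an ideal of S is generated by a single element
  assembled from generators of its components.\<close>

section \<open>Polynomial rings over commutative rings\<close>

lemma UP_carrier: "carrier (UP R) = up R"
  by (simp add: UP_def)

lemma coeff_UP: "p \<in> up R \<Longrightarrow> coeff (UP R) p = p"
  by (simp add: UP_def)

lemma UP_mult_eq:
  "p \<in> up R \<Longrightarrow> q \<in> up R \<Longrightarrow> p \<otimes>\<^bsub>UP R\<^esub> q = (\<lambda>n. \<Oplus>\<^bsub>R\<^esub>i\<in>{..n}. p i \<otimes>\<^bsub>R\<^esub> q (n - i))"
  by (simp add: UP_def)

lemma UP_add_eq: "p \<in> up R \<Longrightarrow> q \<in> up R \<Longrightarrow> p \<oplus>\<^bsub>UP R\<^esub> q = (\<lambda>n. p n \<oplus>\<^bsub>R\<^esub> q n)"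
  by (simp add: UP_def)

text \<open>HOL-Algebra shows that the list-based polynomial ring \<^const>\<open>univ_poly\<close> is a ring only over
  domains, while \<^const>\<open>UP\<close> (coefficient functions) is a commutative ring over every commutative
  ring and has the universal property. Since R_{e,q} is not a domain, we transport both facts along
  the bijection \<open>poly_of_up\<close>, whose inverse is \<^const>\<open>ring.coeff\<close>.\<close>

definition poly_of_up :: "('a, 'b) ring_scheme \<Rightarrow> (nat \<Rightarrow> 'a) \<Rightarrow> 'a list" where
  "poly_of_up R f = ring.normalize R (map f (rev [0..<Suc (deg R f)]))"

context ring
begin

lemma poly_ring_carrierD: "p \<in> carrier (poly_ring R) \<Longrightarrow> set p \<subseteq> carrier R"
  using polynomial_incl by (auto simp: poly_ring_def univ_poly_carrier[symmetric])

lemma up_eq_zero_above_deg: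
  assumes "f \<in> up R" "deg R f < m"
  shows "f m = \<zero>"
  using UP_ring.deg_aboveD[of R f m] assms by (simp add: UP_ring_def UP_def ring_axioms)

lemma coeff_poly_of_up:
  assumes "f \<in> up R"
  shows "coeff (poly_of_up R f) = f"
proof
  fix i
  let ?N = "Suc (deg R f)"
  have "coeff (poly_of_up R f) i = coeff (map f (rev [0..<?N])) i"
    unfolding poly_of_up_def by (simp only: normalize_coeff[symmetric])
  also have "\<dots> = f i"
  proof (cases "i < ?N")
    case True
    then show ?thesis by (simp add: coeff_nth rev_nth del: upt_Suc)
  next
    case False
    then show ?thesis
      using coeff_length[of "map f (rev [0..<?N])" i] up_eq_zero_above_deg[OF assms]
      by (simp del: upt_Suc)
  qed
  finally show "coeff (poly_of_up R f) i = f i" .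
qed

lemma poly_of_up_closed:
  assumes "f \<in> up R"
  shows "poly_of_up R f \<in> carrier (poly_ring R)"
  using assms normalize_gives_polynomial[of "map f (rev [0..<Suc (deg R f)])" "carrier R"]
  by (auto simp: poly_of_up_def poly_ring_def univ_poly_carrier[symmetric] simp del: upt_Suc)

lemma coeff_in_up:
  assumes "set p \<subseteq> carrier R"
  shows "coeff p \<in> up R"
proof
  show "\<exists>n. bound \<zero> n (coeff p)"
    using coeff_length[of p] by (auto simp: bound_def intro!: exI[of _ "length p"])
qed (use assms in simp)

lemma poly_of_up_eqI:
  assumes "f \<in> up R" "p \<in> carrier (poly_ring R)" "coeff p = f"
  shows "poly_of_up R f = p"
  using assms poly_of_up_closed[OF assms(1)] coeff_poly_of_up[OF assms(1)] coeff_iff_polynomial_cond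
  by (auto simp: poly_ring_def univ_poly_carrier[symmetric])

lemma poly_of_up_coeff: "p \<in> carrier (poly_ring R) \<Longrightarrow> poly_of_up R (coeff p) = p"
  using poly_of_up_eqI[OF coeff_in_up[OF poly_ring_carrierD]] by simp

lemma poly_of_up_mult:
  assumes f: "f \<in> up R" and g: "g \<in> up R"
  shows "poly_of_up R (f \<otimes>\<^bsub>UP R\<^esub> g) = poly_of_up R f \<otimes>\<^bsub>poly_ring R\<^esub> poly_of_up R g"
proof (rule poly_of_up_eqI)
  interpret UP: UP_ring R "UP R" by (simp add: UP_ring_def ring_axioms)
  let ?p = "poly_of_up R f" and ?q = "poly_of_up R g"
  have pq: "?p \<in> carrier (poly_ring R)" "?q \<in> carrier (poly_ring R)"
    using f g by (simp_all add: poly_of_up_closed)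
  show "f \<otimes>\<^bsub>UP R\<^esub> g \<in> up R" using f g UP.m_closed by (simp add: UP_carrier)
  show "?p \<otimes>\<^bsub>poly_ring R\<^esub> ?q \<in> carrier (poly_ring R)"
    using pq poly_mult_closed[OF carrier_is_subring]
    by (simp add: poly_ring_def univ_poly_mult univ_poly_carrier[symmetric])
  show "coeff (?p \<otimes>\<^bsub>poly_ring R\<^esub> ?q) = f \<otimes>\<^bsub>UP R\<^esub> g"
    using f g poly_ring_carrierD[OF pq(1)] poly_ring_carrierD[OF pq(2)]
    by (simp add: poly_ring_def univ_poly_mult poly_mult_coeff coeff_poly_of_up UP_mult_eq)
qed

lemma poly_of_up_add:
  assumes f: "f \<in> up R" and g: "g \<in> up R"
  shows "poly_of_up R (f \<oplus>\<^bsub>UP R\<^esub> g) = poly_of_up R f \<oplus>\<^bsub>poly_ring R\<^esub> poly_of_up R g"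
proof (rule poly_of_up_eqI)
  interpret UP: UP_ring R "UP R" by (simp add: UP_ring_def ring_axioms)
  let ?p = "poly_of_up R f" and ?q = "poly_of_up R g"
  have pq: "?p \<in> carrier (poly_ring R)" "?q \<in> carrier (poly_ring R)"
    using f g by (simp_all add: poly_of_up_closed)
  show "f \<oplus>\<^bsub>UP R\<^esub> g \<in> up R" using f g UP.a_closed by (simp add: UP_carrier)
  show "?p \<oplus>\<^bsub>poly_ring R\<^esub> ?q \<in> carrier (poly_ring R)"
    using pq poly_add_closed[OF carrier_is_subring]
    by (simp add: poly_ring_def univ_poly_add univ_poly_carrier[symmetric])
  show "coeff (?p \<oplus>\<^bsub>poly_ring R\<^esub> ?q) = f \<oplus>\<^bsub>UP R\<^esub> g"
    using f g poly_ring_carrierD[OF pq(1)] poly_ring_carrierD[OF pq(2)]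
    by (simp add: poly_ring_def univ_poly_add poly_add_coeff coeff_poly_of_up UP_add_eq
             del: poly_add.simps)
qed

lemma poly_of_up_one:
  assumes "\<one> \<noteq> \<zero>"
  shows "poly_of_up R \<one>\<^bsub>UP R\<^esub> = \<one>\<^bsub>poly_ring R\<^esub>"
proof (rule poly_of_up_eqI)
  interpret UP: UP_ring R "UP R" by (simp add: UP_ring_def ring_axioms)
  show "\<one>\<^bsub>UP R\<^esub> \<in> up R" using UP.one_closed by (simp add: UP_carrier)
  show "\<one>\<^bsub>poly_ring R\<^esub> \<in> carrier (poly_ring R)"
    using assms by (simp add: poly_ring_def univ_poly_one univ_poly_carrier[symmetric] polynomial_def)
  show "coeff \<one>\<^bsub>poly_ring R\<^esub> = \<one>\<^bsub>UP R\<^esub>"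
    by (auto simp: poly_ring_def univ_poly_one UP_def)
qed

lemma poly_of_up_ring_iso:
  assumes "\<one> \<noteq> \<zero>"
  shows "poly_of_up R \<in> ring_iso (UP R) (poly_ring R)"
proof (rule ring_iso_memI)
  show "bij_betw (poly_of_up R) (carrier (UP R)) (carrier (poly_ring R))"
  proof (rule bij_betw_byWitness[where f' = coeff])
    show "\<forall>f\<in>carrier (UP R). coeff (poly_of_up R f) = f"
      by (simp add: UP_carrier coeff_poly_of_up)
    show "\<forall>p\<in>carrier (poly_ring R). poly_of_up R (coeff p) = p"
      by (simp add: poly_of_up_coeff)
    show "poly_of_up R ` carrier (UP R) \<subseteq> carrier (poly_ring R)"
      by (auto simp: UP_carrier poly_of_up_closed)
    show "coeff ` carrier (poly_ring R) \<subseteq> carrier (UP R)"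
      using coeff_in_up[OF poly_ring_carrierD] by (auto simp: UP_carrier)
  qed
next
  show "poly_of_up R f \<in> carrier (poly_ring R)" if "f \<in> carrier (UP R)" for f
    using that by (simp add: UP_carrier poly_of_up_closed)
  show "poly_of_up R (f \<otimes>\<^bsub>UP R\<^esub> g) = poly_of_up R f \<otimes>\<^bsub>poly_ring R\<^esub> poly_of_up R g"
    and "poly_of_up R (f \<oplus>\<^bsub>UP R\<^esub> g) = poly_of_up R f \<oplus>\<^bsub>poly_ring R\<^esub> poly_of_up R g"
    if "f \<in> carrier (UP R)" "g \<in> carrier (UP R)" for f g
    using that poly_of_up_mult poly_of_up_add by (simp_all only: UP_carrier)
  show "poly_of_up R \<one>\<^bsub>UP R\<^esub> = \<one>\<^bsub>poly_ring R\<^esub>"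
    by (rule poly_of_up_one[OF assms])
qed

lemma var_closed_poly_ring:
  assumes "\<one> \<noteq> \<zero>"
  shows "X \<in> carrier (poly_ring R)"
  using assms by (simp add: poly_ring_def univ_poly_carrier[symmetric] var_def polynomial_def)

end

lemma (in cring) cring_poly_ring:
  assumes "\<one> \<noteq> \<zero>"
  shows "cring (poly_ring R)"
proof -
  interpret UP: UP_cring R "UP R" by (simp add: UP_cring_def cring_axioms)
  have "poly_of_up R \<zero>\<^bsub>UP R\<^esub> = \<zero>\<^bsub>poly_ring R\<^esub>"
    by (rule poly_of_up_eqI) (auto simp: UP_def poly_ring_def univ_poly_zero)
  then show ?thesis
    using cring.ring_iso_imp_img_cring[OF UP.UP_cring poly_of_up_ring_iso[OF assms]] by simp
qed

lemma poly_of_up_const: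
  fixes R (structure)
  assumes "ring R" "a \<in> carrier R"
  shows "poly_of_up R (monom (UP R) a 0) = ring.poly_of_const R a"
proof -
  interpret R: ring R by fact
  interpret UP: UP_ring R "UP R" by (simp add: UP_ring_def R.ring_axioms)
  have "R.poly_of_const a \<in> carrier (poly_ring R)"
    using assms R.normalize_gives_polynomial[of "[a]" "carrier R"]
    by (auto simp: poly_ring_def univ_poly_carrier[symmetric] R.poly_of_const_def)
  moreover have "R.coeff (R.poly_of_const a) = monom (UP R) a 0"
    using assms(2) R.normalize_coeff[of "[a]", symmetric] by (auto simp: R.poly_of_const_def UP_def)
  ultimately show ?thesis
    using assms(2) UP.monom_closed by (simp add: R.poly_of_up_eqI UP_def)
qed

lemma poly_of_up_var:
  fixes R (structure)
  assumes "ring R" "\<one> \<noteq> \<zero>"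
  shows "poly_of_up R (monom (UP R) \<one> 1) = X"
proof -
  interpret R: ring R by fact
  interpret UP: UP_ring R "UP R" by (simp add: UP_ring_def R.ring_axioms)
  have "R.coeff X = monom (UP R) \<one> 1"
    by (auto simp: var_def UP_def)
  then show ?thesis
    using UP.monom_closed R.var_closed_poly_ring[OF assms(2)] by (simp add: R.poly_of_up_eqI UP_def)
qed

lemma (in comm_monoid) finprod_submonoid_closed:
  assumes "submonoid H G" "f \<in> A \<rightarrow> H"
  shows "finprod G f A \<in> H"
proof (cases "finite A")
  case True
  have "H \<subseteq> carrier G" using assms(1) by (rule submonoid.subset)
  with True assms(2) show ?thesis
    by (induction A rule: finite_induct)
      (auto simp: submonoid.one_closed[OF assms(1)] submonoid.m_closed[OF assms(1)] Pi_iff subset_iff)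
next
  case False
  then show ?thesis using submonoid.one_closed[OF assms(1)] by simp
qed

lemma (in ring) subring_finsum_closed:
  assumes "subring H R" "f \<in> A \<rightarrow> H"
  shows "finsum R f A \<in> H"
  using add.finprod_submonoid_closed assms subgroup.subgroup_is_submonoid subring.axioms(1) by blast

lemma (in ring) ideal_finsum_closed:
  assumes "ideal I R" "f \<in> A \<rightarrow> I"
  shows "finsum R f A \<in> I"
  using add.finprod_submonoid_closed assms additive_subgroup.a_subgroup ideal.axioms(1)
    subgroup.subgroup_is_submonoid by blast

lemma UP_hom_image_subring:
  fixes R (structure)
  assumes "cring R" "ring S" "\<Phi> \<in> ring_hom (UP R) S" "subring H S"
    and const: "\<And>a. a \<in> carrier R \<Longrightarrow> \<Phi> (monom (UP R) a 0) \<in> H"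
    and var: "\<Phi> (monom (UP R) \<one> 1) \<in> H"
    and f: "f \<in> carrier (UP R)"
  shows "\<Phi> f \<in> H"
proof -
  interpret R: cring R by fact
  interpret UP: UP_cring R "UP R" by (simp add: UP_cring_def R.cring_axioms)
  interpret H: subring H S by fact
  interpret \<Phi>: ring_hom_ring "UP R" S \<Phi>
    using assms(3) by (simp add: UP.UP_ring assms(2) ring_hom_ringI2)
  let ?x = "monom (UP R) \<one> 1"
  let ?t = "\<lambda>i. monom (UP R) (f i) 0 \<otimes>\<^bsub>UP R\<^esub> ?x [^]\<^bsub>UP R\<^esub> i"
  have f_coeffs: "coeff (UP R) f = f" "\<And>i. f i \<in> carrier R"
    using f by (simp_all add: UP_carrier coeff_UP mem_upD)
  have "?t i = monom (UP R) (f i) i" for i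
    using f_coeffs(2) by (simp add: UP.monom_mult[symmetric] UP.monom_pow del: UP.monom_mult)
  then have repr: "(\<Oplus>\<^bsub>UP R\<^esub> i \<in> {..deg R f}. ?t i) = f"
    using UP.up_repr[OF f] f_coeffs(1) by simp
  have t: "?t \<in> {..deg R f} \<rightarrow> carrier (UP R)"
    using f_coeffs(2) by (intro Pi_I UP.m_closed UP.nat_pow_closed UP.monom_closed) simp_all
  have "\<Phi> ?x [^]\<^bsub>S\<^esub> i \<in> H" for i :: nat
    using var by (induction i) (simp_all add: H.m_closed)
  then have "\<Phi> (?t i) \<in> H" for i
    using const[OF f_coeffs(2)] f_coeffs(2) by (simp add: \<Phi>.hom_nat_pow H.m_closed)
  then have "(\<Oplus>\<^bsub>S\<^esub> i \<in> {..deg R f}. \<Phi> (?t i)) \<in> H"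
    by (intro ring.subring_finsum_closed[OF assms(2,4)]) auto
  moreover have "\<Phi> f = (\<Oplus>\<^bsub>S\<^esub> i \<in> {..deg R f}. \<Phi> (?t i))"
    using \<Phi>.hom_finsum[OF t] by (simp only: repr comp_def)
  ultimately show ?thesis by simp
qed

lemma poly_ring_hom_image_subring:
  fixes R (structure)
  assumes "cring R" "\<one> \<noteq> \<zero>" "ring S" "\<psi> \<in> ring_hom (poly_ring R) S" "subring H S"
    and const: "\<And>a. a \<in> carrier R \<Longrightarrow> \<psi> (ring.poly_of_const R a) \<in> H"
    and var: "\<psi> X \<in> H"
    and p: "p \<in> carrier (poly_ring R)"
  shows "\<psi> p \<in> H"
proof -
  interpret R: cring R by fact
  have iso: "poly_of_up R \<in> ring_iso (UP R) (poly_ring R)"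
    by (rule R.poly_of_up_ring_iso[OF assms(2)])
  have "\<psi> \<circ> poly_of_up R \<in> ring_hom (UP R) S"
    using iso assms(4) by (auto simp: ring_iso_def intro: ring_hom_trans)
  then have "(\<psi> \<circ> poly_of_up R) (R.coeff p) \<in> H"
  proof (rule UP_hom_image_subring[OF assms(1,3) _ assms(5)])
    show "(\<psi> \<circ> poly_of_up R) (monom (UP R) a 0) \<in> H" if "a \<in> carrier R" for a
      using const[OF that] poly_of_up_const[OF R.ring_axioms that] by simp
    show "(\<psi> \<circ> poly_of_up R) (monom (UP R) \<one> 1) \<in> H"
      using var poly_of_up_var[OF R.ring_axioms assms(2)] by simp
    show "R.coeff p \<in> carrier (UP R)"
      using R.coeff_in_up[OF R.poly_ring_carrierD[OF p]] by (simp add: UP_carrier)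
  qed
  then show ?thesis using R.poly_of_up_coeff[OF p] by simp
qed

lemma exists_poly_ring_hom:
  fixes R (structure)
  assumes "cring R" "\<one> \<noteq> \<zero>" "cring S" "\<kappa> \<in> ring_hom R S" "x \<in> carrier S"
  obtains \<phi> where "\<phi> \<in> ring_hom (poly_ring R) S"
    and "\<And>a. a \<in> carrier R \<Longrightarrow> \<phi> (ring.poly_of_const R a) = \<kappa> a" and "\<phi> X = x"
proof -
  interpret R: cring R by fact
  interpret UP: UP_pre_univ_prop R S \<kappa> "UP R"
    using assms(1,3,4) by (simp add: UP_pre_univ_prop_def UP_cring_def ring_hom_cring_def
        ring_hom_cring_axioms_def)
  let ?inv = "inv_into (carrier (UP R)) (poly_of_up R)"
  have iso: "poly_of_up R \<in> ring_iso (UP R) (poly_ring R)"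
    by (rule R.poly_of_up_ring_iso[OF assms(2)])
  have inv: "?inv \<in> ring_hom (poly_ring R) (UP R)"
    using ring_iso_set_sym[OF UP.UP_ring iso] by (simp add: ring_iso_def)
  have inv_eq: "?inv (poly_of_up R f) = f" if "f \<in> carrier (UP R)" for f
    using iso that by (simp add: ring_iso_def bij_betw_def inv_into_f_f)
  define \<phi> where "\<phi> = eval R S \<kappa> x \<circ> ?inv"
  show thesis
  proof
    show "\<phi> \<in> ring_hom (poly_ring R) S"
      unfolding \<phi>_def using inv UP.eval_ring_hom[OF assms(5)] by (rule ring_hom_trans)
    show "\<phi> (R.poly_of_const a) = \<kappa> a" if "a \<in> carrier R" for a
      using that inv_eq[of "monom (UP R) a 0"] poly_of_up_const[OF R.ring_axioms that]
            UP.eval_const[OF assms(5) that] by (simp add: \<phi>_def)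
    show "\<phi> X = x"
      using inv_eq[of "monom (UP R) \<one> 1"] poly_of_up_var[OF R.ring_axioms assms(2)]
            UP.eval_monom1[OF assms(5)] by (simp add: \<phi>_def)
  qed
qed

lemma poly_of_const_ring_hom:
  fixes R (structure)
  assumes "cring R" "\<one> \<noteq> \<zero>"
  shows "ring.poly_of_const R \<in> ring_hom R (poly_ring R)"
proof -
  interpret R: cring R by fact
  interpret UP: UP_cring R "UP R" by (simp add: UP_cring_def R.cring_axioms)
  have "poly_of_up R \<circ> (\<lambda>a. monom (UP R) a 0) \<in> ring_hom R (poly_ring R)"
    using UP.const_ring_hom R.poly_of_up_ring_iso[OF assms(2)]
    by (auto simp: ring_iso_def intro: ring_hom_trans)
  then show ?thesis
    by (rule R.ring_hom_restrict) (simp add: poly_of_up_const[OF R.ring_axioms])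
qed

section \<open>The quotient rings A[x]/(x^n - 1)\<close>

definition cyclic_quot_map :: "('a, 'b) ring_scheme \<Rightarrow> nat \<Rightarrow> 'a list \<Rightarrow> 'a list set" where
  "cyclic_quot_map A n p = PIdl\<^bsub>poly_ring A\<^esub> (xn_minus_1 A n) +>\<^bsub>poly_ring A\<^esub> p"

context cring
begin

context
  assumes nontrivial: "\<one> \<noteq> \<zero>"
begin

lemma xn_minus_1_closed: "xn_minus_1 R n \<in> carrier (poly_ring R)"
proof -
  interpret P: cring "poly_ring R" by (rule cring_poly_ring[OF nontrivial])
  show ?thesis using var_closed_poly_ring[OF nontrivial] by (simp add: xn_minus_1_def)
qed

lemma ideal_xn_minus_1: "ideal (PIdl\<^bsub>poly_ring R\<^esub> (xn_minus_1 R n)) (poly_ring R)"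
  by (rule cring.cgenideal_ideal[OF cring_poly_ring[OF nontrivial] xn_minus_1_closed])

lemma cring_cyclic_quot: "cring (cyclic_quot R n)"
  unfolding cyclic_quot_def
  by (rule ideal.quotient_is_cring[OF ideal_xn_minus_1 cring_poly_ring[OF nontrivial]])

lemma cyclic_quot_map_ring_hom: "cyclic_quot_map R n \<in> ring_hom (poly_ring R) (cyclic_quot R n)"
  unfolding cyclic_quot_def cyclic_quot_map_def[abs_def]
  by (rule ideal.rcos_ring_hom[OF ideal_xn_minus_1])

lemma cyclic_quot_map_surj: "cyclic_quot_map R n ` carrier (poly_ring R) = carrier (cyclic_quot R n)"
  by (auto simp: cyclic_quot_def cyclic_quot_map_def FactRing_def A_RCOSETS_def')

lemma cyclic_quot_var_pow: "cyclic_quot_map R n X [^]\<^bsub>cyclic_quot R n\<^esub> n = \<one>\<^bsub>cyclic_quot R n\<^esub>"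
proof -
  interpret P: cring "poly_ring R" by (rule cring_poly_ring[OF nontrivial])
  interpret \<pi>: ring_hom_ring "poly_ring R" "cyclic_quot R n" "cyclic_quot_map R n"
    using cyclic_quot_map_ring_hom cring.axioms(1)[OF cring_cyclic_quot]
    by (simp add: P.ring_axioms ring_hom_ringI2)
  have X: "X \<in> carrier (poly_ring R)" by (rule var_closed_poly_ring[OF nontrivial])
  have "X [^]\<^bsub>poly_ring R\<^esub> n \<ominus>\<^bsub>poly_ring R\<^esub> \<one>\<^bsub>poly_ring R\<^esub> \<in> PIdl\<^bsub>poly_ring R\<^esub> (xn_minus_1 R n)"
    using P.cgenideal_self[OF xn_minus_1_closed] by (simp add: xn_minus_1_def)
  then have "cyclic_quot_map R n (X [^]\<^bsub>poly_ring R\<^esub> n) = cyclic_quot_map R n \<one>\<^bsub>poly_ring R\<^esub>"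
    unfolding cyclic_quot_map_def
    using P.quotient_eq_iff_same_a_r_cos[OF ideal_xn_minus_1] X by simp
  then show ?thesis using X by (simp add: \<pi>.hom_nat_pow)
qed

lemma cyclic_quot_one_neq_zero: "\<one>\<^bsub>cyclic_quot R n\<^esub> \<noteq> \<zero>\<^bsub>cyclic_quot R n\<^esub>"
proof
  interpret P: cring "poly_ring R" by (rule cring_poly_ring[OF nontrivial])
  have ev: "(\<lambda>p. eval p \<one>) \<in> ring_hom (poly_ring R) R"
    using eval_is_hom[OF carrier_is_subring one_closed] by (simp add: poly_ring_def)
  interpret ev: ring_hom_cring "poly_ring R" R "\<lambda>p. eval p \<one>"
    using ev by (intro ring_hom_cringI) (simp_all add: P.cring_axioms cring_axioms)
  have X: "X \<in> carrier (poly_ring R)" by (rule var_closed_poly_ring[OF nontrivial])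
  have ev_f: "eval (xn_minus_1 R n) \<one> = \<zero>"
    using X by (simp add: xn_minus_1_def ev.hom_pow eval_var)
  assume "\<one>\<^bsub>cyclic_quot R n\<^esub> = \<zero>\<^bsub>cyclic_quot R n\<^esub>"
  then have "\<one>\<^bsub>poly_ring R\<^esub> \<in> PIdl\<^bsub>poly_ring R\<^esub> (xn_minus_1 R n)"
    using ideal.rcos_const_imp_mem[OF ideal_xn_minus_1] by (simp add: cyclic_quot_def FactRing_def)
  then obtain h where "h \<in> carrier (poly_ring R)" "\<one>\<^bsub>poly_ring R\<^esub> = h \<otimes>\<^bsub>poly_ring R\<^esub> xn_minus_1 R n"
    unfolding cgenideal_def by auto
  then have "eval \<one>\<^bsub>poly_ring R\<^esub> \<one> = \<zero>"
    using xn_minus_1_closed ev_f by (simp del: eval.simps)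
  then show False using nontrivial by simp
qed

lemma cyclic_quot_const_ring_hom:
  "cyclic_quot_map R n \<circ> poly_of_const \<in> ring_hom R (cyclic_quot R n)"
  using poly_of_const_ring_hom[OF cring_axioms nontrivial] cyclic_quot_map_ring_hom
  by (rule ring_hom_trans)

lemma cyclic_quot_var_closed: "cyclic_quot_map R n X \<in> carrier (cyclic_quot R n)"
  using ring_hom_closed[OF cyclic_quot_map_ring_hom var_closed_poly_ring[OF nontrivial]] .

lemma cyclic_quot_hom_image_subring:
  assumes "ring S" "\<psi> \<in> ring_hom (cyclic_quot R n) S" "subring H S"
    and "\<And>a. a \<in> carrier R \<Longrightarrow> \<psi> (cyclic_quot_map R n (poly_of_const a)) \<in> H"
    and "\<psi> (cyclic_quot_map R n X) \<in> H"
  shows "\<psi> ` carrier (cyclic_quot R n) \<subseteq> H"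
proof -
  have hom: "\<psi> \<circ> cyclic_quot_map R n \<in> ring_hom (poly_ring R) S"
    using cyclic_quot_map_ring_hom assms(2) by (rule ring_hom_trans)
  have "(\<psi> \<circ> cyclic_quot_map R n) p \<in> H" if "p \<in> carrier (poly_ring R)" for p
    by (rule poly_ring_hom_image_subring[OF cring_axioms nontrivial assms(1) hom assms(3)])
      (use assms(4,5) that in auto)
  then show ?thesis using cyclic_quot_map_surj[symmetric] by auto
qed

end

end

section \<open>Principal ideals from a decomposition by orthogonal idempotents\<close>

lemma (in cring) colon_ideal:
  assumes "ideal I R" "c \<in> carrier R"
  shows "ideal {s \<in> carrier R. c \<otimes> s \<in> I} R"
proof -
  interpret I: ideal I R by fact
  show ?thesis
  proof (rule idealI[OF ring_axioms])
    show "subgroup {s \<in> carrier R. c \<otimes> s \<in> I} (add_monoid R)"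
      using assms(2) by (intro add.subgroupI) (auto simp: r_minus r_distr I.a_inv_closed I.a_closed)
  next
    fix a x assume a: "a \<in> {s \<in> carrier R. c \<otimes> s \<in> I}" and x: "x \<in> carrier R"
    have "c \<otimes> (x \<otimes> a) = x \<otimes> (c \<otimes> a)" "c \<otimes> (a \<otimes> x) = (c \<otimes> a) \<otimes> x"
      using a x assms(2) by (simp_all add: m_lcomm m_assoc)
    then have "c \<otimes> (x \<otimes> a) \<in> I" "c \<otimes> (a \<otimes> x) \<in> I"
      using a x I.I_l_closed I.I_r_closed by simp_all
    then show "x \<otimes> a \<in> {s \<in> carrier R. c \<otimes> s \<in> I}" "a \<otimes> x \<in> {s \<in> carrier R. c \<otimes> s \<in> I}"
      using a x by auto
  qed
qed

lemma (in cring) subring_image_mod_annihilator: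
  assumes "ring P" "\<phi> \<in> ring_hom P R" "c \<in> carrier R"
  shows "subring {s \<in> carrier R. \<exists>g\<in>carrier P. c \<otimes> s = c \<otimes> \<phi> g} R"
proof -
  interpret P: ring P by fact
  interpret \<phi>: ring_hom_ring P R \<phi>
    using assms(2) by (simp add: P.ring_axioms ring_axioms ring_hom_ringI2)
  let ?T = "{s \<in> carrier R. \<exists>g\<in>carrier P. c \<otimes> s = c \<otimes> \<phi> g}"
  show ?thesis
  proof (rule subringI)
    show "?T \<subseteq> carrier R" by auto
    show "\<one> \<in> ?T" by (auto intro!: bexI[of _ "\<one>\<^bsub>P\<^esub>"])
  next
    fix s assume "s \<in> ?T"
    then obtain g where "s \<in> carrier R" "g \<in> carrier P" "c \<otimes> s = c \<otimes> \<phi> g" by blast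
    then show "\<ominus> s \<in> ?T"
      using assms(3) by (intro CollectI conjI bexI[of _ "\<ominus>\<^bsub>P\<^esub> g"]) (simp_all add: r_minus)
  next
    fix s t assume "s \<in> ?T" "t \<in> ?T"
    then obtain g h where s: "s \<in> carrier R" "g \<in> carrier P" "c \<otimes> s = c \<otimes> \<phi> g"
      and t: "t \<in> carrier R" "h \<in> carrier P" "c \<otimes> t = c \<otimes> \<phi> h" by blast
    have "c \<otimes> (s \<otimes> t) = (c \<otimes> s) \<otimes> t"
      using s(1) t(1) assms(3) by (simp add: m_assoc)
    also have "\<dots> = (c \<otimes> \<phi> g) \<otimes> t"
      by (simp only: s(3))
    also have "\<dots> = \<phi> g \<otimes> (c \<otimes> t)"
      using s(1,2) t(1) assms(3) by (simp add: m_assoc m_lcomm)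
    also have "\<dots> = \<phi> g \<otimes> (c \<otimes> \<phi> h)"
      by (simp only: t(3))
    also have "\<dots> = c \<otimes> \<phi> (g \<otimes>\<^bsub>P\<^esub> h)"
      using s(2) t(2) assms(3) by (simp add: m_lcomm)
    finally show "s \<otimes> t \<in> ?T" using s t by blast
    have "c \<otimes> (s \<oplus> t) = c \<otimes> \<phi> (g \<oplus>\<^bsub>P\<^esub> h)"
      using s t assms(3) by (simp add: r_distr)
    then show "s \<oplus> t \<in> ?T" using s t by blast
  qed
qed

lemma (in cring) idempotent_component_finsum:
  fixes e :: nat
  assumes \<epsilon>: "\<And>i. i < e \<Longrightarrow> \<epsilon> i \<in> carrier R" and b: "\<And>i. i < e \<Longrightarrow> b i \<in> carrier R"
    and orth: "\<And>i j. i < e \<Longrightarrow> j < e \<Longrightarrow> \<epsilon> i \<otimes> \<epsilon> j = (if i = j then \<epsilon> i else \<zero>)"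
    and k: "k < e"
  shows "\<epsilon> k \<otimes> (\<Oplus>i\<in>{..<e}. \<epsilon> i \<otimes> b i) = \<epsilon> k \<otimes> b k"
proof -
  have "\<epsilon> k \<otimes> (\<Oplus>i\<in>{..<e}. \<epsilon> i \<otimes> b i) = (\<Oplus>i\<in>{..<e}. \<epsilon> k \<otimes> (\<epsilon> i \<otimes> b i))"
    using \<epsilon> b k by (intro finsum_rdistr) auto
  also have "\<dots> = (\<Oplus>i\<in>{..<e}. if k = i then \<epsilon> k \<otimes> b k else \<zero>)"
    using \<epsilon> b k by (intro finsum_cong') (auto simp: orth m_assoc[symmetric])
  finally show ?thesis using \<epsilon> b k by (simp add: finsum_singleton)
qed

lemma (in cring) ideal_mem_by_idempotent_components:
  fixes e :: nat
  assumes \<epsilon>: "\<And>i. i < e \<Longrightarrow> \<epsilon> i \<in> carrier R" and sum: "(\<Oplus>i\<in>{..<e}. \<epsilon> i) = \<one>"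
    and "ideal J R" "y \<in> carrier R" "\<And>i. i < e \<Longrightarrow> \<epsilon> i \<otimes> y \<in> J"
  shows "y \<in> J"
proof -
  have "(\<Oplus>i\<in>{..<e}. \<epsilon> i \<otimes> y) \<in> J"
    using assms(3,5) by (intro ideal_finsum_closed) auto
  moreover have "(\<Oplus>i\<in>{..<e}. \<epsilon> i \<otimes> y) = y"
    using \<epsilon> sum assms(4) by (simp add: finsum_ldistr[symmetric])
  ultimately show ?thesis by simp
qed

text \<open>Each component \<open>\<epsilon> i \<otimes> I\<close> is the image of the principal ideal \<open>{g. \<epsilon> i \<otimes> \<phi> g \<in> I}\<close>
  of \<open>P\<close>; summing the \<open>\<epsilon> i\<close>-components of its generators gives a single generator of \<open>I\<close>.\<close>

lemma principalideal_of_idempotent_decomposition: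
  fixes S (structure) and P :: "('c, 'd) ring_scheme" and e :: nat
  assumes "cring S" "principal_domain P" "\<phi> \<in> ring_hom P S"
    and \<epsilon>: "\<And>i. i < e \<Longrightarrow> \<epsilon> i \<in> carrier S"
    and sum: "(\<Oplus>i\<in>{..<e}. \<epsilon> i) = \<one>"
    and orth: "\<And>i j. i < e \<Longrightarrow> j < e \<Longrightarrow> \<epsilon> i \<otimes> \<epsilon> j = (if i = j then \<epsilon> i else \<zero>)"
    and onto: "\<And>i s. i < e \<Longrightarrow> s \<in> carrier S \<Longrightarrow> \<exists>g\<in>carrier P. \<epsilon> i \<otimes> s = \<epsilon> i \<otimes> \<phi> g"
    and I: "ideal I S"
  shows "principalideal I S"
proof -
  interpret cring S by fact
  interpret P: principal_domain P by fact
  interpret I: ideal I S by fact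
  interpret \<phi>: ring_hom_ring P S \<phi>
    using assms(3) by (simp add: P.ring_axioms ring_axioms ring_hom_ringI2)
  have "ideal {g \<in> carrier P. \<phi> g \<in> {s \<in> carrier S. \<epsilon> i \<otimes> s \<in> I}} P" if "i < e" for i
    by (rule \<phi>.ideal_vimage[OF colon_ideal[OF I \<epsilon>[OF that]]])
  then have "\<exists>G\<in>carrier P. {g \<in> carrier P. \<epsilon> i \<otimes> \<phi> g \<in> I} = PIdl\<^bsub>P\<^esub> G" if "i < e" for i
    using P.exists_gen that by (simp add: conj_commute[of "\<phi> _ \<in> carrier S"] cong: conj_cong)
  then obtain G where G: "\<And>i. i < e \<Longrightarrow> G i \<in> carrier P"
    and J: "\<And>i. i < e \<Longrightarrow> {g \<in> carrier P. \<epsilon> i \<otimes> \<phi> g \<in> I} = PIdl\<^bsub>P\<^esub> (G i)"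
    by metis
  define a where "a = (\<Oplus>i\<in>{..<e}. \<epsilon> i \<otimes> \<phi> (G i))"
  have a: "a \<in> carrier S" unfolding a_def using \<epsilon> G by (intro finsum_closed) auto
  have "a \<in> I"
    unfolding a_def using J P.cgenideal_self[OF G] by (intro ideal_finsum_closed[OF I]) auto
  have "y \<in> PIdl a" if y: "y \<in> I" for y
  proof (rule ideal_mem_by_idempotent_components[OF \<epsilon> sum cgenideal_ideal[OF a] I.Icarr[OF y]])
    fix i assume i: "i < e"
    obtain g where g: "g \<in> carrier P" "\<epsilon> i \<otimes> y = \<epsilon> i \<otimes> \<phi> g"
      using onto[OF i I.Icarr[OF y]] by blast
    then have "g \<in> PIdl\<^bsub>P\<^esub> (G i)"
      using J[OF i] I.I_l_closed[OF y \<epsilon>[OF i]] by auto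
    then obtain h where h: "h \<in> carrier P" "g = h \<otimes>\<^bsub>P\<^esub> G i"
      unfolding cgenideal_def by auto
    have "\<epsilon> i \<otimes> y = \<phi> h \<otimes> (\<epsilon> i \<otimes> \<phi> (G i))"
      using g h G[OF i] \<epsilon>[OF i] by (simp add: m_lcomm)
    also have "\<dots> = (\<phi> h \<otimes> \<epsilon> i) \<otimes> a"
      using h \<epsilon> G i a idempotent_component_finsum[OF \<epsilon> _ orth i, of "\<lambda>i. \<phi> (G i)"]
      by (simp add: a_def m_assoc)
    finally show "\<epsilon> i \<otimes> y \<in> PIdl a"
      unfolding cgenideal_def using h \<epsilon>[OF i] by auto
  qed
  then have "I = PIdl a"
    using cgenideal_minimal[OF I \<open>a \<in> I\<close>] by auto
  then show ?thesis
    using principalidealI[OF I] a cgenideal_eq_genideal[OF a] by auto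
qed

section \<open>Discrete Fourier idempotents\<close>

lemma (in comm_monoid) finprod_swap:
  assumes "finite A" "finite B" "\<And>i j. i \<in> A \<Longrightarrow> j \<in> B \<Longrightarrow> f i j \<in> carrier G"
  shows "(\<Otimes>i\<in>A. \<Otimes>j\<in>B. f i j) = (\<Otimes>j\<in>B. \<Otimes>i\<in>A. f i j)"
  using assms(1,3)
proof (induction A rule: finite_induct)
  case (insert a A)
  have "(\<Otimes>i\<in>insert a A. \<Otimes>j\<in>B. f i j) = (\<Otimes>j\<in>B. f a j) \<otimes> (\<Otimes>j\<in>B. \<Otimes>i\<in>A. f i j)"
    using insert by (simp add: Pi_def)
  also have "\<dots> = (\<Otimes>j\<in>B. f a j \<otimes> (\<Otimes>i\<in>A. f i j))"
    using insert by (simp add: Pi_def)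
  also have "\<dots> = (\<Otimes>j\<in>B. \<Otimes>i\<in>insert a A. f i j)"
    using insert by (intro finprod_cong') (auto simp: Pi_def)
  finally show ?case .
qed simp

lemma (in cring) finsum_powers_rotate:
  fixes e :: nat
  assumes x: "x \<in> carrier R" and "x [^] e = \<one>"
  shows "x \<otimes> (\<Oplus>j\<in>{..<e}. x [^] j) = (\<Oplus>j\<in>{..<e}. x [^] j)"
proof (cases e)
  case (Suc n)
  have "x \<otimes> (\<Oplus>j\<in>{..<e}. x [^] j) = (\<Oplus>j\<in>{..n}. x [^] Suc j)"
    using x by (simp add: Suc lessThan_Suc_atMost finsum_rdistr m_comm)
  moreover have "(\<Oplus>j\<in>{..n}. x [^] Suc j) \<oplus> \<one> = \<one> \<oplus> (\<Oplus>j\<in>{..n}. x [^] j)"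
    using x finsum_Suc2[of "\<lambda>j. x [^] j" n] finsum_Suc[of "\<lambda>j. x [^] j" n] \<open>x [^] e = \<one>\<close>
    by (simp add: Suc del: finsum_Suc)
  then have "(\<Oplus>j\<in>{..n}. x [^] Suc j) = (\<Oplus>j\<in>{..n}. x [^] j)"
    using x by (simp add: a_comm[of _ \<one>] del: nat_pow_Suc)
  ultimately show ?thesis by (simp add: Suc lessThan_Suc_atMost)
qed (simp add: x)

lemma (in domain) finsum_powers_root_of_unity:
  fixes e :: nat
  assumes r: "r \<in> carrier R" and "r [^] e = \<one>" and "r \<noteq> \<one>"
  shows "(\<Oplus>j\<in>{..<e}. r [^] j) = \<zero>"
proof -
  let ?s = "\<Oplus>j\<in>{..<e}. r [^] j"
  have s: "?s \<in> carrier R" using r by simp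
  have "(r \<ominus> \<one>) \<otimes> ?s = \<zero>"
    using finsum_powers_rotate[OF assms(1,2)] r s by (simp add: minus_eq l_distr l_minus r_neg)
  moreover have "r \<ominus> \<one> \<noteq> \<zero>" using r \<open>r \<noteq> \<one>\<close> by simp
  ultimately show ?thesis using integral[of "r \<ominus> \<one>" ?s] r s by auto
qed

lemma (in cring) pow_mult_eigenvector:
  assumes "a \<in> carrier R" "x \<in> carrier R" "v \<in> carrier R" "a \<otimes> x = v \<otimes> x"
  shows "a [^] (j :: nat) \<otimes> x = v [^] j \<otimes> x"
proof (induction j)
  case (Suc j)
  have "a [^] Suc j \<otimes> x = a [^] j \<otimes> (a \<otimes> x)" using assms by (simp add: m_assoc)
  also have "\<dots> = v \<otimes> (a [^] j \<otimes> x)" using assms by (simp add: m_lcomm)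
  finally show ?case using assms by (simp add: Suc m_assoc m_comm[of v])
qed (simp add: assms)

lemma pred_mult_add_dvd_imp_eq:
  fixes e k i :: nat
  assumes "k < e" "i < e" "e dvd (e - 1) * k + i"
  shows "i = k"
proof -
  obtain d where "e = Suc d" using assms(1) by (cases e) auto
  then have "(e - 1) * k + i + k = e * k + i" by simp
  then have "((e - 1) * k + i + k) mod e = (e * k + i) mod e" by (simp only:)
  also have "\<dots> = i" using assms(2) by simp
  finally have "((e - 1) * k + i + k) mod e = i" .
  moreover have "((e - 1) * k + i + k) mod e = (((e - 1) * k + i) mod e + k) mod e"
    by (rule mod_add_left_eq[symmetric])
  ultimately show ?thesis using assms(1,3) by simp
qed

locale dft_idempotents = cring S for S (structure) +
  fixes e :: nat and w U einv :: 'a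
  assumes e_pos: "0 < e"
    and closed: "w \<in> carrier S" "U \<in> carrier S" "einv \<in> carrier S"
    and U_pow_e: "U [^] e = \<one>" and w_pow_e: "w [^] e = \<one>"
    and finsum_powers_w: "\<And>k. \<not> e dvd k \<Longrightarrow> (\<Oplus>j\<in>{..<e}. (w [^] k) [^] j) = \<zero>"
    and einv: "einv \<otimes> (\<Oplus>j\<in>{..<e}. \<one>) = \<one>"
begin

text \<open>\<open>w [^] ((e - 1) * i)\<close> is the inverse of \<open>w [^] i\<close>, so \<open>idem i\<close> is the projection onto the
  \<open>w [^] i\<close>-eigenspace of multiplication by \<open>U\<close>.\<close>

definition idem :: "nat \<Rightarrow> 'a" where
  "idem i = einv \<otimes> (\<Oplus>j\<in>{..<e}. (w [^] ((e - 1) * i) \<otimes> U) [^] j)"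

lemma idem_closed: "idem i \<in> carrier S"
  unfolding idem_def using closed by simp

lemma w_pow_mult_e: "w [^] (e * k) = \<one>"
  using closed w_pow_e nat_pow_pow[of w e k] by simp

lemma w_pow_inverse: "w [^] ((e - 1) * i) \<otimes> w [^] i = \<one>"
proof -
  have "(e - 1) * i + i = e * i" using e_pos by (cases e) auto
  then show ?thesis using closed w_pow_mult_e by (simp add: nat_pow_mult)
qed

lemma U_mult_idem: "U \<otimes> idem i = w [^] i \<otimes> idem i"
proof -
  let ?c = "w [^] ((e - 1) * i) \<otimes> U"
  let ?D = "\<Oplus>j\<in>{..<e}. ?c [^] j"
  have c: "?c \<in> carrier S" and D: "?D \<in> carrier S" using closed by simp_all
  have "(w [^] ((e - 1) * i)) [^] e = \<one>"
    using closed w_pow_mult_e[of "(e - 1) * i"] by (simp add: nat_pow_pow mult.commute)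
  then have "?c [^] e = \<one>"
    using closed U_pow_e by (simp add: nat_pow_distrib)
  then have rotate: "?c \<otimes> ?D = ?D" by (rule finsum_powers_rotate[OF c])
  have "w [^] i \<otimes> ?c = (w [^] ((e - 1) * i) \<otimes> w [^] i) \<otimes> U"
    using closed by (simp add: m_ac)
  then have U: "U = w [^] i \<otimes> ?c" using closed w_pow_inverse[of i] by simp
  have "U \<otimes> idem i = einv \<otimes> (U \<otimes> ?D)"
    unfolding idem_def using closed D by (simp add: m_lcomm)
  also have "U \<otimes> ?D = (w [^] i \<otimes> ?c) \<otimes> ?D"
    using U by (rule arg_cong)
  also have "\<dots> = w [^] i \<otimes> ?D"
    using closed c D by (simp only: m_assoc rotate nat_pow_closed)
  also have "einv \<otimes> (w [^] i \<otimes> ?D) = w [^] i \<otimes> idem i"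
    unfolding idem_def using closed D by (simp add: m_lcomm)
  finally show ?thesis .
qed

lemma idem_mult:
  assumes k: "k < e" and i: "i < e"
  shows "idem k \<otimes> idem i = (if k = i then idem i else \<zero>)"
proof -
  let ?c = "w [^] ((e - 1) * k) \<otimes> U"
  let ?r = "w [^] ((e - 1) * k + i)"
  let ?x = "idem i"
  have x: "?x \<in> carrier S" by (rule idem_closed)
  have "?c \<otimes> ?x = (w [^] ((e - 1) * k) \<otimes> w [^] i) \<otimes> ?x"
    using closed x U_mult_idem[of i] by (simp add: m_assoc)
  then have eigen: "?c [^] j \<otimes> ?x = ?r [^] j \<otimes> ?x" for j :: nat
    using pow_mult_eigenvector[of ?c ?x "w [^] ((e - 1) * k) \<otimes> w [^] i" j] closed x
    by (simp add: nat_pow_mult)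
  have "idem k \<otimes> ?x = einv \<otimes> (\<Oplus>j\<in>{..<e}. ?c [^] j \<otimes> ?x)"
    unfolding idem_def[of k] using closed x by (simp add: m_assoc finsum_ldistr)
  also have "(\<Oplus>j\<in>{..<e}. ?c [^] j \<otimes> ?x) = (\<Oplus>j\<in>{..<e}. ?r [^] j \<otimes> ?x)"
    using closed x eigen by (intro finsum_cong') auto
  also have "\<dots> = (\<Oplus>j\<in>{..<e}. ?r [^] j) \<otimes> ?x"
    using closed x by (simp add: finsum_ldistr)
  finally have prod: "idem k \<otimes> ?x = einv \<otimes> ((\<Oplus>j\<in>{..<e}. ?r [^] j) \<otimes> ?x)" .
  show ?thesis
  proof (cases "k = i")
    case True
    then have "?r = \<one>" using w_pow_inverse[of i] closed by (simp add: nat_pow_mult)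
    then show ?thesis
      using prod True closed x einv by (simp add: m_assoc[symmetric])
  next
    case False
    then have "\<not> e dvd (e - 1) * k + i" using pred_mult_add_dvd_imp_eq[OF k i] by auto
    then show ?thesis
      using prod False closed x finsum_powers_w by simp
  qed
qed

lemma finsum_idem: "(\<Oplus>i\<in>{..<e}. idem i) = \<one>"
proof -
  let ?v = "\<lambda>j. w [^] ((e - 1) * j)"
  have v: "?v j \<in> carrier S" for j using closed by simp
  have pow_eq: "(?v i \<otimes> U) [^] j = ?v j [^] i \<otimes> U [^] j" for i j :: nat
    using closed by (simp add: nat_pow_distrib nat_pow_pow mult.commute mult.left_commute)
  have "(\<Oplus>i\<in>{..<e}. idem i) = einv \<otimes> (\<Oplus>i\<in>{..<e}. \<Oplus>j\<in>{..<e}. (?v i \<otimes> U) [^] j)"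
    unfolding idem_def using closed by (intro finsum_rdistr[symmetric]) auto
  also have "(\<Oplus>i\<in>{..<e}. \<Oplus>j\<in>{..<e}. (?v i \<otimes> U) [^] j)
      = (\<Oplus>i\<in>{..<e}. \<Oplus>j\<in>{..<e}. ?v j [^] i \<otimes> U [^] j)"
    by (simp only: pow_eq)
  also have "\<dots> = (\<Oplus>j\<in>{..<e}. \<Oplus>i\<in>{..<e}. ?v j [^] i \<otimes> U [^] j)"
    using closed by (intro add.finprod_swap) auto
  also have "\<dots> = (\<Oplus>j\<in>{..<e}. (\<Oplus>i\<in>{..<e}. ?v j [^] i) \<otimes> U [^] j)"
    using closed v by (intro finsum_cong') (simp_all add: finsum_ldistr)
  also have "\<dots> = (\<Oplus>j\<in>{..<e}. if 0 = j then (\<Oplus>i\<in>{..<e}. \<one>) else \<zero>)"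
  proof (intro finsum_cong')
    fix j assume j: "j \<in> {..<e}"
    show "(\<Oplus>i\<in>{..<e}. ?v j [^] i) \<otimes> U [^] j = (if 0 = j then (\<Oplus>i\<in>{..<e}. \<one>) else \<zero>)"
    proof (cases "j = 0")
      case False
      then have "\<not> e dvd (e - 1) * j + 0" using pred_mult_add_dvd_imp_eq[of j e 0] j e_pos by auto
      then show ?thesis using False closed finsum_powers_w by simp
    qed (use closed in simp)
  qed (use closed in auto)
  also have "\<dots> = (\<Oplus>i\<in>{..<e}. \<one>)"
    using e_pos finsum_singleton[of 0 "{..<e}" "\<lambda>_. \<Oplus>i\<in>{..<e}. \<one>"] by simp
  finally show ?thesis using einv by simp
qed

end

section \<open>Finite fields\<close>

lemma (in field) exists_root_of_unity:
  assumes fin: "finite (carrier R)" and dvd: "e dvd card (carrier R) - 1"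
  shows "\<exists>\<omega>\<in>carrier R. \<forall>k. \<omega> [^] k = \<one> \<longleftrightarrow> e dvd k"
proof -
  let ?G = "Multiplicative_Group.mult_of R"
  interpret G: group ?G
    rewrites "([^]\<^bsub>?G\<^esub>) = (([^]) :: _ \<Rightarrow> nat \<Rightarrow> _)" and "\<one>\<^bsub>?G\<^esub> = \<one>"
    by (rule field_mult_group) (simp_all add: Multiplicative_Group.nat_pow_mult_of)
  have finG: "finite (carrier ?G)" using fin by simp
  obtain a where a: "a \<in> carrier ?G" and gen: "carrier ?G = {a [^] i | i::nat. i \<in> UNIV}"
    using finite_field_mult_group_has_gen[OF fin] by blast
  let ?q = "card (carrier R) - 1"
  have order: "order ?G = ?q" using order_mult_of[OF fin] by (simp add: order_def)
  have "carrier ?G = (\<lambda>i. a [^] i) ` {0 .. G.ord a - 1}"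
    using gen G.ord_elems[OF finG a] by auto
  then have "?q \<le> G.ord a"
    using card_image_le[of "{0 .. G.ord a - 1}" "\<lambda>i. a [^] i"] G.ord_ge_1[OF finG a] order
    by (simp add: order_def)
  then have ord_a: "G.ord a = ?q" using G.ord_le_group_order[OF finG a] order by simp
  obtain d where d: "?q = e * d" using dvd by blast
  have "?q \<noteq> 0" using order G.order_gt_0_iff_finite finG by simp
  then have "d \<noteq> 0" using d by (metis mult_0_right)
  then have "d dvd G.ord a" "G.ord a div d = e" using ord_a d by auto
  then have "G.ord (a [^] d) = e" using G.ord_pow[OF a] \<open>d \<noteq> 0\<close> by simp
  then have "\<forall>k. (a [^] d) [^] k = \<one> \<longleftrightarrow> e dvd k" using G.pow_eq_id[OF G.nat_pow_closed[OF a]] by simp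
  then show ?thesis using a by (intro bexI[of _ "a [^] d"]) auto
qed

lemma (in field) exists_inverse_of_card_divisor:
  assumes fin: "finite (carrier R)" and dvd: "e dvd card (carrier R) - 1"
  shows "\<exists>einv\<in>carrier R. einv \<otimes> (\<Oplus>j\<in>{..<e}. \<one>) = \<one>"
proof -
  obtain d where "card (carrier R) - 1 = e * d" using dvd by blast
  moreover have "card (carrier R) > 0" using fin card_gt_0_iff by blast
  ultimately have d: "card (carrier R) = e * d + 1" by simp
  have "[card (carrier R)] \<cdot> \<one> = \<zero>"
    using add.pow_order_eq_1[of \<one>] by (simp add: order_def)
  then have "([e] \<cdot> \<one>) \<otimes> ([d] \<cdot> \<one>) \<oplus> \<one> = \<zero>"
    using d by (simp add: add.nat_pow_mult add_pow_ldistr add.nat_pow_pow mult.commute)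
  then have "[e] \<cdot> \<one> \<noteq> \<zero>" by auto
  moreover have "(\<Oplus>j\<in>{..<e}. \<one>) = [e] \<cdot> \<one>" by (simp add: add.finprod_const)
  ultimately show ?thesis
    using field_Units by (intro bexI[of _ "inv ([e] \<cdot> \<one>)"]) auto
qed

lemma (in field) exists_eigen_idempotents:
  assumes fin: "finite (carrier R)" and dvd: "e dvd card (carrier R) - 1"
    and S: "cring S" and \<kappa>: "\<kappa> \<in> ring_hom R S"
    and U: "U \<in> carrier S" "U [^]\<^bsub>S\<^esub> e = \<one>\<^bsub>S\<^esub>"
  obtains \<epsilon> where "\<And>i. i < e \<Longrightarrow> \<epsilon> i \<in> carrier S" and "(\<Oplus>\<^bsub>S\<^esub>i\<in>{..<e}. \<epsilon> i) = \<one>\<^bsub>S\<^esub>"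
    and "\<And>i j. i < e \<Longrightarrow> j < e \<Longrightarrow> \<epsilon> i \<otimes>\<^bsub>S\<^esub> \<epsilon> j = (if i = j then \<epsilon> i else \<zero>\<^bsub>S\<^esub>)"
    and "\<And>i. i < e \<Longrightarrow> \<exists>c\<in>carrier R. U \<otimes>\<^bsub>S\<^esub> \<epsilon> i = \<kappa> c \<otimes>\<^bsub>S\<^esub> \<epsilon> i"
proof -
  interpret \<kappa>: ring_hom_cring R S \<kappa>
    using S \<kappa> by (intro ring_hom_cringI) (simp_all add: cring_axioms)
  obtain \<omega> where \<omega>: "\<omega> \<in> carrier R" "\<And>k. \<omega> [^] k = \<one> \<longleftrightarrow> e dvd k"
    using exists_root_of_unity[OF fin dvd] by blast
  obtain einv where einv: "einv \<in> carrier R" "einv \<otimes> (\<Oplus>j\<in>{..<e}. \<one>) = \<one>"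
    using exists_inverse_of_card_divisor[OF fin dvd] by blast
  have "2 \<le> card (carrier R)"
    using card_mono[OF fin, of "{\<zero>, \<one>}"] by simp
  then have "0 < e" using dvd by (rule_tac ccontr) simp
  have "(\<Oplus>\<^bsub>S\<^esub>j\<in>{..<e}. (\<kappa> \<omega> [^]\<^bsub>S\<^esub> k) [^]\<^bsub>S\<^esub> j) = \<zero>\<^bsub>S\<^esub>" if "\<not> e dvd k" for k
  proof -
    have "(\<omega> [^] k) [^] e = \<one>" "\<omega> [^] k \<noteq> \<one>"
      using \<omega> that by (simp_all add: nat_pow_pow)
    then have "\<kappa> (\<Oplus>j\<in>{..<e}. (\<omega> [^] k) [^] j) = \<zero>\<^bsub>S\<^esub>"
      using finsum_powers_root_of_unity[of "\<omega> [^] k" e] \<omega>(1) by simp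
    then show ?thesis using \<omega>(1) by (simp add: comp_def \<kappa>.hom_pow)
  qed
  moreover have "\<kappa> einv \<otimes>\<^bsub>S\<^esub> (\<Oplus>\<^bsub>S\<^esub>j\<in>{..<e}. \<one>\<^bsub>S\<^esub>) = \<one>\<^bsub>S\<^esub>"
    using arg_cong[OF einv(2), of \<kappa>] einv(1) by (simp add: comp_def)
  moreover have "\<kappa> \<omega> [^]\<^bsub>S\<^esub> e = \<one>\<^bsub>S\<^esub>" using \<omega>(1) \<omega>(2)[of e] by (simp flip: \<kappa>.hom_pow)
  ultimately interpret dft: dft_idempotents S e "\<kappa> \<omega>" U "\<kappa> einv"
    using S U \<open>0 < e\<close> \<omega>(1) einv(1) by (simp add: dft_idempotents_def dft_idempotents_axioms_def)
  show thesis
  proof (rule that[of dft.idem])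
    show "\<exists>c\<in>carrier R. U \<otimes>\<^bsub>S\<^esub> dft.idem i = \<kappa> c \<otimes>\<^bsub>S\<^esub> dft.idem i" for i
      using dft.U_mult_idem[of i] \<omega>(1) by (intro bexI[of _ "\<omega> [^] i"]) (simp_all add: \<kappa>.hom_pow)
  qed (simp_all add: dft.idem_closed dft.idem_mult dft.finsum_idem)
qed

section \<open>Cyclic codes over R_{e,q}\<close>

locale Req_cyclic_codes = field K for K (structure) +
  fixes e n :: nat
begin

abbreviation A where "A \<equiv> Req K e"
abbreviation S where "S \<equiv> cyclic_quot A n"

definition \<kappa>A where "\<kappa>A = cyclic_quot_map A n \<circ> ring.poly_of_const A"
definition \<kappa> where "\<kappa> = \<kappa>A \<circ> (cyclic_quot_map K e \<circ> poly_of_const)"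
definition u where "u = \<kappa>A (cyclic_quot_map K e X)"
definition x where "x = cyclic_quot_map A n X\<^bsub>A\<^esub>"

lemma A_cring: "cring A" and A_nontrivial: "\<one>\<^bsub>A\<^esub> \<noteq> \<zero>\<^bsub>A\<^esub>"
  unfolding Req_def using cring_cyclic_quot cyclic_quot_one_neq_zero by simp_all

lemma S_cring: "cring S"
  by (rule cring.cring_cyclic_quot[OF A_cring A_nontrivial])

lemma \<kappa>A_hom: "\<kappa>A \<in> ring_hom A S"
  unfolding \<kappa>A_def by (rule cring.cyclic_quot_const_ring_hom[OF A_cring A_nontrivial])

lemma \<kappa>_hom: "\<kappa> \<in> ring_hom K S"
  unfolding \<kappa>_def
  using cyclic_quot_const_ring_hom[OF one_not_zero, of e, folded Req_def] \<kappa>A_hom by (rule ring_hom_trans)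

lemma u_closed: "u \<in> carrier S" and u_pow: "u [^]\<^bsub>S\<^esub> e = \<one>\<^bsub>S\<^esub>"
proof -
  interpret \<kappa>A: ring_hom_cring A S \<kappa>A
    using \<kappa>A_hom by (intro ring_hom_cringI) (simp_all add: A_cring S_cring)
  show "u \<in> carrier S" "u [^]\<^bsub>S\<^esub> e = \<one>\<^bsub>S\<^esub>"
    using cyclic_quot_var_closed[OF one_not_zero, of e, folded Req_def]
      cyclic_quot_var_pow[OF one_not_zero, of e, folded Req_def]
    by (simp_all add: u_def flip: \<kappa>A.hom_pow)
qed

lemma x_closed: "x \<in> carrier S"
  unfolding x_def by (rule cring.cyclic_quot_var_closed[OF A_cring A_nontrivial])

lemma generated:
  assumes T: "subring T S" and "\<kappa> ` carrier K \<subseteq> T" "u \<in> T" "x \<in> T"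
  shows "carrier S \<subseteq> T"
proof -
  have ring_S: "ring S" using S_cring by (rule cring.axioms(1))
  have "\<kappa>A ` carrier A \<subseteq> T"
    unfolding Req_def
    by (rule cyclic_quot_hom_image_subring[OF one_not_zero])
      (use ring_S \<kappa>A_hom T assms(2,3) in \<open>simp_all add: Req_def \<kappa>_def u_def image_subset_iff\<close>)
  then show ?thesis
    using cring.cyclic_quot_hom_image_subring[OF A_cring A_nontrivial ring_S id_ring_hom T] assms(4)
    by (simp add: \<kappa>A_def x_def image_subset_iff)
qed

lemma decomposition:
  assumes fin: "finite (carrier K)" and dvd: "e dvd card (carrier K) - 1"
  obtains \<phi> \<epsilon> where "\<phi> \<in> ring_hom (poly_ring K) S"
    and "\<And>i. i < e \<Longrightarrow> \<epsilon> i \<in> carrier S" and "(\<Oplus>\<^bsub>S\<^esub>i\<in>{..<e}. \<epsilon> i) = \<one>\<^bsub>S\<^esub>"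
    and "\<And>i j. i < e \<Longrightarrow> j < e \<Longrightarrow> \<epsilon> i \<otimes>\<^bsub>S\<^esub> \<epsilon> j = (if i = j then \<epsilon> i else \<zero>\<^bsub>S\<^esub>)"
    and "\<And>i s. i < e \<Longrightarrow> s \<in> carrier S \<Longrightarrow> \<exists>g\<in>carrier (poly_ring K). \<epsilon> i \<otimes>\<^bsub>S\<^esub> s = \<epsilon> i \<otimes>\<^bsub>S\<^esub> \<phi> g"
proof -
  interpret S: cring S by (rule S_cring)
  obtain \<epsilon> where \<epsilon>: "\<And>i. i < e \<Longrightarrow> \<epsilon> i \<in> carrier S" "(\<Oplus>\<^bsub>S\<^esub>i\<in>{..<e}. \<epsilon> i) = \<one>\<^bsub>S\<^esub>"
    "\<And>i j. i < e \<Longrightarrow> j < e \<Longrightarrow> \<epsilon> i \<otimes>\<^bsub>S\<^esub> \<epsilon> j = (if i = j then \<epsilon> i else \<zero>\<^bsub>S\<^esub>)"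
    and eigen: "\<And>i. i < e \<Longrightarrow> \<exists>c\<in>carrier K. u \<otimes>\<^bsub>S\<^esub> \<epsilon> i = \<kappa> c \<otimes>\<^bsub>S\<^esub> \<epsilon> i"
    using exists_eigen_idempotents[OF fin dvd S_cring \<kappa>_hom u_closed u_pow] by blast
  obtain \<phi> where \<phi>: "\<phi> \<in> ring_hom (poly_ring K) S"
    "\<And>a. a \<in> carrier K \<Longrightarrow> \<phi> (poly_of_const a) = \<kappa> a" "\<phi> X = x"
    using exists_poly_ring_hom[OF cring_axioms one_not_zero S_cring \<kappa>_hom x_closed] by blast
  have const: "poly_of_const a \<in> carrier (poly_ring K)" if "a \<in> carrier K" for a
    using ring_hom_closed[OF poly_of_const_ring_hom[OF cring_axioms one_not_zero] that] .
  have "\<exists>g\<in>carrier (poly_ring K). \<epsilon> i \<otimes>\<^bsub>S\<^esub> s = \<epsilon> i \<otimes>\<^bsub>S\<^esub> \<phi> g"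
    if i: "i < e" and s: "s \<in> carrier S" for i s
  proof -
    define T where "T = {s \<in> carrier S. \<exists>g\<in>carrier (poly_ring K). \<epsilon> i \<otimes>\<^bsub>S\<^esub> s = \<epsilon> i \<otimes>\<^bsub>S\<^esub> \<phi> g}"
    have "\<kappa> ` carrier K \<subseteq> T"
      unfolding T_def using const \<phi>(2) ring_hom_closed[OF \<kappa>_hom] by (auto intro!: bexI[of _ "poly_of_const _"])
    moreover have "u \<in> T"
    proof -
      obtain c where c: "c \<in> carrier K" "u \<otimes>\<^bsub>S\<^esub> \<epsilon> i = \<kappa> c \<otimes>\<^bsub>S\<^esub> \<epsilon> i"
        using eigen[OF i] by blast
      then have "\<epsilon> i \<otimes>\<^bsub>S\<^esub> u = \<epsilon> i \<otimes>\<^bsub>S\<^esub> \<phi> (poly_of_const c)"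
        using u_closed \<epsilon>(1)[OF i] ring_hom_closed[OF \<kappa>_hom c(1)] \<phi>(2)[OF c(1)] by (simp add: S.m_comm)
      then show ?thesis unfolding T_def using u_closed const[OF c(1)] by blast
    qed
    moreover have "x \<in> T"
      unfolding T_def using x_closed \<phi>(3) var_closed_poly_ring[OF one_not_zero] by (auto intro!: bexI[of _ X])
    moreover have "subring T S"
      unfolding T_def using cring.axioms(1)[OF cring_poly_ring[OF one_not_zero]] \<phi>(1) \<epsilon>(1)[OF i]
      by (rule S.subring_image_mod_annihilator)
    ultimately show ?thesis using generated s unfolding T_def by blast
  qed
  with \<phi>(1) \<epsilon> show thesis by (rule that)
qed

lemma principal_ideals:
  assumes "finite (carrier K)" "e dvd card (carrier K) - 1" "ideal I S"
  shows "principalideal I S"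
proof -
  have P: "principal_domain (poly_ring K)"
    unfolding poly_ring_def by (rule univ_poly_is_principal[OF carrier_is_subfield])
  show ?thesis
    by (rule decomposition[OF assms(1,2)],
        rule principalideal_of_idempotent_decomposition[OF S_cring P _ _ _ _ _ assms(3)])
qed

end

text \<open>Only \<open>e dvd |K| - 1\<close> is used: it provides a primitive \<open>e\<close>-th root of unity in \<open>K\<close> and
  makes \<open>e\<close> invertible in \<open>K\<close>.\<close>

theorem corollary3p6:
  fixes K :: "('a, 'b) ring_scheme" and p m e t n :: nat
  assumes "field K" and "finite (carrier K)"
    and "Factorial_Ring.prime p" and "odd p" and "m \<ge> 1" and "card (carrier K) = p ^ m"
    and "e \<ge> 2" and "t \<ge> 1" and "card (carrier K) = e * t + 1"
    and "n \<ge> 1"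
  shows "\<forall>I. ideal I (cyclic_quot (Req K e) n) \<longrightarrow>
           principalideal I (cyclic_quot (Req K e) n)"
proof (intro allI impI)
  fix I assume I: "ideal I (cyclic_quot (Req K e) n)"
  interpret Req_cyclic_codes K e n
    by (simp add: Req_cyclic_codes_def \<open>field K\<close>)
  have "e dvd card (carrier K) - 1"
    using \<open>card (carrier K) = e * t + 1\<close> by simp
  then show "principalideal I (cyclic_quot (Req K e) n)"
    using principal_ideals \<open>finite (carrier K)\<close> I by blast
qed

end
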